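(* Let $k\in\mathbb{N}$. For every finite set $A\subseteq\mathbb{N}$ with $\min(A)=0$ and $\max(A)\le k$ and $A\neq\{0,1,\ldots,k\}$, we have $d(A)<d(\{0,1,\ldots,k\})$. That is, $\{0,1,\ldots,k\}$ is the unique maximum of $d(\cdot)$ on the collection of sets $A\subseteq\mathbb{N}$ with $\min(A)=0$ and $\max(A)\le k$.
   Context: $\mathbb{N}=\{0,1,2,\ldots\}$. For $A,B\subseteq\mathbb{N}$ the sumset is $A+B=\{a+b: a\in A, b\in B\}$. For a nonempty finite set $C\subseteq\mathbb{N}$, a set $B\subseteq\mathbb{N}$ is an (additive) divisor of $C$ if there exists $D\subseteq\mathbb{N}$ with $B+D=C$; $d(C)$ denotes the number of distinct divisors of $C$. *)

theory Defs
  imports Main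
begin

definition sumset :: "nat set \<Rightarrow> nat set \<Rightarrow> nat set" where
  "sumset A B = {a + b | a b. a \<in> A \<and> b \<in> B}"

definition is_divisor :: "nat set \<Rightarrow> nat set \<Rightarrow> bool" where
  "is_divisor B C \<longleftrightarrow> (\<exists>D. sumset B D = C)"

definition num_divisors :: "nat set \<Rightarrow> nat" where
  "num_divisors C = card {B. is_divisor B C}"

end

theory Submission
  imports Defs
begin

text \<open>If \<open>B + D = A\<close> with \<open>0 \<in> A \<subseteq> {0..k}\<close>, put \<open>b = max B\<close>; then every element of \<open>D\<close>
  is at most \<open>k - b\<close>. Filling the gaps of \<open>A\<close> below \<open>b\<close> into \<open>B\<close>, i.e. passing to
  \<open>B' = B \<union> ([0, b] \ A)\<close>, gives a set with \<open>B' + [0, k - b] = [0, k]\<close>: every \<open>y \<le> k\<close> lies within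
  \<open>k - b\<close> above some element of \<open>B'\<close>. Since \<open>B' \<inter> A = B\<close>, the map \<open>B \<mapsto> B'\<close> is injective,
  and its image misses the divisor \<open>[0, j]\<close> of \<open>[0, k]\<close> for any \<open>j \<le> k\<close> outside \<open>A\<close>, because
  \<open>max B' = b \<in> A\<close>.\<close>

lemma mem_sumset_iff: "x \<in> sumset B D \<longleftrightarrow> (\<exists>b\<in>B. \<exists>d\<in>D. x = b + d)"
  unfolding sumset_def by blast

lemma sumset_eq_atLeastAtMost:
  fixes b c :: nat
  assumes "E \<subseteq> {0..b}" and cover: "\<And>y. y \<le> b + c \<Longrightarrow> \<exists>z\<in>E. z \<le> y \<and> y \<le> z + c"
  shows "sumset E {0..c} = {0..b + c}"
proof
  show "sumset E {0..c} \<subseteq> {0..b + c}"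
  proof
    fix x assume "x \<in> sumset E {0..c}"
    then obtain z d where "z \<in> E" "d \<le> c" "x = z + d"
      by (auto simp: mem_sumset_iff)
    moreover have "z \<le> b"
      using assms(1) \<open>z \<in> E\<close> by auto
    ultimately show "x \<in> {0..b + c}"
      by simp
  qed
  show "{0..b + c} \<subseteq> sumset E {0..c}"
  proof
    fix y assume "y \<in> {0..b + c}"
    then obtain z where "z \<in> E" "z \<le> y" "y \<le> z + c" using cover by auto
    then have "y = z + (y - z)" "y - z \<in> {0..c}" by auto
    with \<open>z \<in> E\<close> show "y \<in> sumset E {0..c}"
      unfolding mem_sumset_iff by blast
  qed
qed

lemma is_divisor_atLeastAtMost:
  fixes j k :: nat
  assumes "j \<le> k"
  shows "is_divisor {0..j} {0..k}"
proof -
  have "sumset {0..j} {0..k - j} = {0..j + (k - j)}"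
  proof (rule sumset_eq_atLeastAtMost)
    fix y assume "y \<le> j + (k - j)"
    then show "\<exists>z\<in>{0..j}. z \<le> y \<and> y \<le> z + (k - j)"
      by (intro bexI[of _ "min y j"]) auto
  qed simp
  then show ?thesis
    using assms unfolding is_divisor_def by auto
qed

lemma divisor_subset_and_zero:
  assumes "sumset B D = C" and "0 \<in> C"
  shows "B \<subseteq> C" and "0 \<in> B" and "0 \<in> D"
proof -
  show "0 \<in> B" "0 \<in> D"
    using assms by (auto simp: mem_sumset_iff)
  with assms(1) show "B \<subseteq> C"
    by (metis add_0_right mem_sumset_iff subsetI)
qed

lemma is_divisor_subset: "is_divisor B C \<Longrightarrow> 0 \<in> C \<Longrightarrow> B \<subseteq> C"
  unfolding is_divisor_def using divisor_subset_and_zero(1) by blast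

lemma is_divisor_zero: "is_divisor B C \<Longrightarrow> 0 \<in> C \<Longrightarrow> 0 \<in> B"
  unfolding is_divisor_def using divisor_subset_and_zero(2) by blast

lemma finite_divisors: "finite C \<Longrightarrow> 0 \<in> C \<Longrightarrow> finite {B. is_divisor B C}"
  by (rule finite_subset[of _ "Pow C"]) (auto dest: is_divisor_subset)

definition fill_gaps :: "nat set \<Rightarrow> nat set \<Rightarrow> nat set" where
  "fill_gaps A B = B \<union> ({0..Max B} - A)"

lemma fill_gaps_Int: "B \<subseteq> A \<Longrightarrow> fill_gaps A B \<inter> A = B"
  unfolding fill_gaps_def by blast

lemma inj_on_fill_gaps: "inj_on (fill_gaps A) (Pow A)"
  by (rule inj_on_inverseI[of _ "\<lambda>B'. B' \<inter> A"]) (simp add: fill_gaps_Int)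

lemma Max_fill_gaps:
  assumes "finite B" and "B \<noteq> {}"
  shows "Max (fill_gaps A B) = Max B"
  using assms unfolding fill_gaps_def by (intro Max_eqI) auto

lemma is_divisor_fill_gaps:
  fixes k :: nat
  assumes "finite A" and "0 \<in> A" and "A \<subseteq> {0..k}" and "is_divisor B A"
  shows "is_divisor (fill_gaps A B) {0..k}"
proof -
  obtain D where D: "sumset B D = A"
    using assms(4) unfolding is_divisor_def by blast
  have "B \<subseteq> A" "0 \<in> B"
    using divisor_subset_and_zero[OF D assms(2)] by auto
  define b where "b = Max B"
  have "finite B"
    using \<open>B \<subseteq> A\<close> assms(1) finite_subset by blast
  then have "b \<in> B" and le_b: "\<And>x. x \<in> B \<Longrightarrow> x \<le> b"
    using \<open>0 \<in> B\<close> unfolding b_def by (auto intro: Max_in)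
  then have "b \<le> k"
    using \<open>B \<subseteq> A\<close> assms(3) by auto
  have D_le: "d \<le> k - b" if "d \<in> D" for d
  proof -
    have "b + d \<in> A"
      unfolding D[symmetric] mem_sumset_iff using \<open>b \<in> B\<close> that by blast
    then show ?thesis
      using assms(3) by auto
  qed
  have "sumset (fill_gaps A B) {0..k - b} = {0..b + (k - b)}"
  proof (rule sumset_eq_atLeastAtMost)
    show "fill_gaps A B \<subseteq> {0..b}"
      using le_b unfolding fill_gaps_def b_def by auto
    fix y assume "y \<le> b + (k - b)"
    consider "y \<le> k - b" | "b \<le> y" | "y < b" "y \<notin> A" | "y \<in> A"
      by linarith
    then show "\<exists>z\<in>fill_gaps A B. z \<le> y \<and> y \<le> z + (k - b)"
    proof cases
      case 1
      then show ?thesis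
        using \<open>0 \<in> B\<close> unfolding fill_gaps_def by auto
    next
      case 2
      then show ?thesis
        using \<open>b \<in> B\<close> \<open>y \<le> b + (k - b)\<close> unfolding fill_gaps_def by auto
    next
      case 3
      then show ?thesis
        unfolding fill_gaps_def b_def by auto
    next
      case 4
      then obtain \<beta> \<delta> where "\<beta> \<in> B" "\<delta> \<in> D" "y = \<beta> + \<delta>"
        using D by (auto simp: mem_sumset_iff)
      then show ?thesis
        using D_le unfolding fill_gaps_def by (intro bexI[of _ \<beta>]) auto
    qed
  qed
  then show ?thesis
    using \<open>b \<le> k\<close> unfolding is_divisor_def by auto
qed

lemma fill_gaps_ne_atLeastAtMost:
  assumes "finite A" and "0 \<in> A" and "is_divisor B A" and "j \<notin> A"
  shows "fill_gaps A B \<noteq> {0..j}"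
proof
  assume eq: "fill_gaps A B = {0..j}"
  have "B \<subseteq> A" "0 \<in> B"
    using is_divisor_subset[OF assms(3,2)] is_divisor_zero[OF assms(3,2)] .
  have "finite B" "B \<noteq> {}"
    using \<open>B \<subseteq> A\<close> \<open>0 \<in> B\<close> assms(1) finite_subset by auto
  then have "Max B \<in> A"
    using \<open>B \<subseteq> A\<close> Max_in by blast
  moreover have "Max B = j"
    using Max_fill_gaps[OF \<open>finite B\<close> \<open>B \<noteq> {}\<close>, of A] eq Max_eqI[of "{0..j}" j]
    by auto
  ultimately show False
    using assms(4) by simp
qed

theorem mainTheorem1:
  fixes k :: nat and A :: "nat set"
  assumes "finite A" and "A \<noteq> {}" and "Min A = 0" and "Max A \<le> k"
    and "A \<noteq> {0..k}"
  shows "num_divisors A < num_divisors {0..k}"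
proof -
  have "0 \<in> A"
    using assms(1-3) Min_in by metis
  have "A \<subseteq> {0..k}"
    using assms(1,4) by (auto dest: Max_ge)
  with assms(5) obtain j where "j \<in> {0..k}" "j \<notin> A"
    by blast
  let ?S = "{B. is_divisor B A}" and ?T = "{B. is_divisor B {0..k}}"
  have "fill_gaps A ` ?S \<subseteq> ?T"
    using is_divisor_fill_gaps[OF assms(1) \<open>0 \<in> A\<close> \<open>A \<subseteq> {0..k}\<close>] by auto
  moreover have "{0..j} \<in> ?T - fill_gaps A ` ?S"
    using is_divisor_atLeastAtMost[of j k] \<open>j \<in> {0..k}\<close>
      fill_gaps_ne_atLeastAtMost[OF assms(1) \<open>0 \<in> A\<close> _ \<open>j \<notin> A\<close>] by auto
  ultimately have "fill_gaps A ` ?S \<subset> ?T"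
    by blast
  have "inj_on (fill_gaps A) ?S"
    using inj_on_fill_gaps by (rule inj_on_subset) (auto dest: is_divisor_subset[OF _ \<open>0 \<in> A\<close>])
  then have "card ?S = card (fill_gaps A ` ?S)"
    by (rule card_image[symmetric])
  also have "\<dots> < card ?T"
    using \<open>fill_gaps A ` ?S \<subset> ?T\<close> by (intro psubset_card_mono finite_divisors) auto
  finally show ?thesis
    unfolding num_divisors_def .
qed

end
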